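(* Let $G=(V,E)$ be a simple undirected graph on $n$ nodes, let $0<\epsilon<\frac13$ and $\delta>0$, and let $D\subseteq V$ be an $\epsilon^3$-near clique with $|D|\ge\delta n$. Let $C=K_{\epsilon^2}(D)\cap D$. Then $|C|\ge(1-\epsilon)|D|-\frac{1}{\epsilon^2}$.
   Context: $\Gamma(v)$ denotes the set of neighbors of $v$. For $Y\subseteq V$ and $0\le\eta\le1$: $K_\eta(Y)=\{v\in V: |\Gamma(v)\cap Y|\ge(1-\eta)|Y|\}$. Each undirected edge $\{u,v\}$ is counted as two directed edges; a set $D\subseteq V$ is a $\gamma$-near clique if $|\{(u,v)\in D\times D:\{u,v\}\in E\}|\ge(1-\gamma)|D|(|D|-1)$. *)

theory Defs
  imports Main Complex_Main
begin

definition simple_graph :: "'a set \<Rightarrow> ('a \<Rightarrow> 'a \<Rightarrow> bool) \<Rightarrow> bool" where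
  "simple_graph V E \<longleftrightarrow> finite V \<and> (\<forall>u v. E u v \<longrightarrow> E v u)
     \<and> (\<forall>v. \<not> E v v) \<and> (\<forall>u v. E u v \<longrightarrow> u \<in> V \<and> v \<in> V)"

definition nbrs :: "'a set \<Rightarrow> ('a \<Rightarrow> 'a \<Rightarrow> bool) \<Rightarrow> 'a \<Rightarrow> 'a set" where
  "nbrs V E v = {u \<in> V. E v u}"

definition K_set :: "'a set \<Rightarrow> ('a \<Rightarrow> 'a \<Rightarrow> bool) \<Rightarrow> real \<Rightarrow> 'a set \<Rightarrow> 'a set" where
  "K_set V E eta Y = {v \<in> V. real (card (nbrs V E v \<inter> Y)) \<ge> (1 - eta) * real (card Y)}"

text \<open>Number of directed edges inside D (each undirected edge counted twice).\<close>
definition dir_edges :: "('a \<Rightarrow> 'a \<Rightarrow> bool) \<Rightarrow> 'a set \<Rightarrow> nat" where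
  "dir_edges E D = card {(u, v). u \<in> D \<and> v \<in> D \<and> E u v}"

definition near_clique :: "'a set \<Rightarrow> ('a \<Rightarrow> 'a \<Rightarrow> bool) \<Rightarrow> real \<Rightarrow> 'a set \<Rightarrow> bool" where
  "near_clique V E gamma D \<longleftrightarrow> D \<subseteq> V \<and>
     real (dir_edges E D) \<ge> (1 - gamma) * real (card D) * (real (card D) - 1)"

end

theory Submission
  imports Defs
begin

text \<open>Every vertex of D outside K_eta(D) misses more than eta |D| - 1 of the other vertices of D,
  while only gamma |D| (|D| - 1) ordered pairs of D are non-edges. Hence
  |D - K_eta(D)| (eta |D| - 1) <= gamma |D| (|D| - 1), which forces
  |D - K_eta(D)| <= (gamma |D| + 1) / eta; for gamma = eps^3 and eta = eps^2 this is
  eps |D| + 1/eps^2.\<close>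

lemma dir_edges_eq_sum_card_nbrs:
  assumes "D \<subseteq> V" "finite D"
  shows "dir_edges E D = (\<Sum>u\<in>D. card (nbrs V E u \<inter> D))"
proof -
  have "{(u, v). u \<in> D \<and> v \<in> D \<and> E u v} = Sigma D (\<lambda>u. nbrs V E u \<inter> D)"
    using assms(1) unfolding nbrs_def by auto
  then show ?thesis
    unfolding dir_edges_def using assms(2) by (simp add: card_SigmaI)
qed

lemma card_nbrs_inter_le:
  assumes "\<not> E u u" "u \<in> D" "finite D"
  shows "real (card (nbrs V E u \<inter> D)) \<le> real (card D) - 1"
proof -
  have "nbrs V E u \<inter> D \<subseteq> D - {u}"
    using assms(1) unfolding nbrs_def by auto
  then have "card (nbrs V E u \<inter> D) \<le> card (D - {u})"
    using assms(3) by (intro card_mono) auto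
  moreover have "card (D - {u}) = card D - 1" and "card D \<noteq> 0"
    using assms(2,3) by auto
  ultimately show ?thesis by linarith
qed

lemma dir_edges_le_split_K_set:
  fixes \<eta> :: real
  assumes "simple_graph V E" "D \<subseteq> V"
  defines "K \<equiv> K_set V E \<eta> D"
  shows "real (dir_edges E D)
    \<le> real (card (D \<inter> K)) * (real (card D) - 1) + real (card (D - K)) * ((1 - \<eta>) * real (card D))"
proof -
  have fin: "finite D"
    using assms(1,2) finite_subset unfolding simple_graph_def by blast
  have irrefl: "\<And>u. \<not> E u u"
    using assms(1) unfolding simple_graph_def by blast
  let ?f = "\<lambda>u. real (card (nbrs V E u \<inter> D))"
  have inside: "?f u \<le> real (card D) - 1" if "u \<in> D" for u
    using card_nbrs_inter_le[of E u D V] irrefl that fin by blast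
  have outside: "?f u \<le> (1 - \<eta>) * real (card D)" if "u \<in> D - K" for u
    using that assms(2) unfolding K_def K_set_def by auto
  have "real (dir_edges E D) = (\<Sum>u\<in>D. ?f u)"
    by (simp add: dir_edges_eq_sum_card_nbrs[OF assms(2) fin])
  also have "\<dots> = (\<Sum>u\<in>D \<inter> K. ?f u) + (\<Sum>u\<in>D - K. ?f u)"
    by (rule sum.Int_Diff[OF fin])
  also have "\<dots> \<le> (\<Sum>u\<in>D \<inter> K. real (card D) - 1) + (\<Sum>u\<in>D - K. (1 - \<eta>) * real (card D))"
    using inside outside by (intro add_mono sum_mono) auto
  finally show ?thesis by simp
qed

lemma bound_from_missing_pairs:
  fixes b d \<gamma> \<eta> :: real
  assumes "0 < \<eta>" "0 \<le> \<gamma>" "0 \<le> b" "b \<le> d"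
    and missing: "b * (\<eta> * d - 1) \<le> \<gamma> * d * (d - 1)"
  shows "b \<le> (\<gamma> * d + 1) / \<eta>"
proof (rule ccontr)
  assume "\<not> ?thesis"
  then have big: "\<eta> * b > \<gamma> * d + 1"
    using assms(1) by (simp add: field_simps)
  moreover have "\<eta> * b \<le> \<eta> * d"
    using assms(1,4) by simp
  ultimately have gap: "\<eta> * d - \<gamma> * d > 1" by linarith
  have "\<gamma> * d \<ge> 0" "\<gamma> * \<eta> * d \<ge> 0"
    using assms(1-4) by simp_all
  then have pos: "\<eta> * d - 1 > 0"
    using gap by linarith
  have "(\<gamma> * d + 1) * (\<eta> * d - 1) < \<eta> * b * (\<eta> * d - 1)"
    using big pos by (intro mult_strict_right_mono) auto
  also have "\<dots> \<le> \<eta> * (\<gamma> * d * (d - 1))"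
    using mult_left_mono[OF missing, of \<eta>] assms(1) by (simp add: ac_simps)
  finally have "\<eta> * d - \<gamma> * d + \<gamma> * \<eta> * d < 1"
    by (simp add: algebra_simps)
  with gap \<open>\<gamma> * \<eta> * d \<ge> 0\<close> show False by linarith
qed

lemma card_diff_K_set_le:
  assumes "simple_graph V E" "near_clique V E \<gamma> D" "0 < \<eta>" "0 \<le> \<gamma>"
  shows "real (card (D - K_set V E \<eta> D)) \<le> (\<gamma> * real (card D) + 1) / \<eta>"
proof -
  define K where "K = K_set V E \<eta> D"
  define d where "d = real (card D)"
  define b where "b = real (card (D - K))"
  have DV: "D \<subseteq> V" and dense: "(1 - \<gamma>) * d * (d - 1) \<le> real (dir_edges E D)"
    using assms(2) unfolding near_clique_def d_def by auto
  have fin: "finite D"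
    using assms(1) DV finite_subset unfolding simple_graph_def by blast
  have inside: "real (card (D \<inter> K)) = d - b"
    unfolding d_def b_def using card_Int_Diff[OF fin, of K] by simp
  have "b \<le> d"
    unfolding b_def d_def using fin by (simp add: card_mono)
  have "real (dir_edges E D) \<le> (d - b) * (d - 1) + b * ((1 - \<eta>) * d)"
    using dir_edges_le_split_K_set[OF assms(1) DV, of \<eta>]
    unfolding K_def[symmetric] d_def[symmetric] b_def[symmetric] inside .
  with dense have "(1 - \<gamma>) * d * (d - 1) \<le> (d - b) * (d - 1) + b * ((1 - \<eta>) * d)"
    by linarith
  then have "b * (\<eta> * d - 1) \<le> \<gamma> * d * (d - 1)"
    by (simp add: algebra_simps)
  then have "b \<le> (\<gamma> * d + 1) / \<eta>"
    using bound_from_missing_pairs[OF assms(3,4) _ \<open>b \<le> d\<close>] b_def by simp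
  then show ?thesis
    unfolding b_def d_def K_def .
qed

theorem lemma5p4:
  fixes V :: "'a set" and E :: "'a \<Rightarrow> 'a \<Rightarrow> bool" and D :: "'a set"
    and n :: nat and \<epsilon> \<delta> :: real
  assumes "simple_graph V E"
    and "n = card V"
    and "0 < \<epsilon>" and "\<epsilon> < 1/3" and "\<delta> > 0"
    and "near_clique V E (\<epsilon>^3) D"
    and "real (card D) \<ge> \<delta> * real n"
  shows "real (card (K_set V E (\<epsilon>^2) D \<inter> D)) \<ge> (1 - \<epsilon>) * real (card D) - 1 / \<epsilon>^2"
proof -
  let ?K = "K_set V E (\<epsilon>^2) D"
  have fin: "finite D"
    using assms(1,6) finite_subset unfolding simple_graph_def near_clique_def by blast
  have "real (card (D - ?K)) \<le> (\<epsilon>^3 * real (card D) + 1) / \<epsilon>^2"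
    using card_diff_K_set_le[OF assms(1,6)] assms(3) by simp
  also have "\<dots> = \<epsilon> * real (card D) + 1 / \<epsilon>^2"
    using assms(3) by (simp add: field_simps power2_eq_square power3_eq_cube)
  finally have "real (card (D - ?K)) \<le> \<epsilon> * real (card D) + 1 / \<epsilon>^2" .
  moreover have "real (card (?K \<inter> D)) + real (card (D - ?K)) = real (card D)"
    using card_Int_Diff[OF fin, of ?K] by (simp add: Int_commute)
  ultimately show ?thesis
    by (simp add: algebra_simps)
qed

end
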